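(* Let $A$ be an integral domain with quotient field $\mathrm{qf}(A)$. Then the trivial ring extension $A\propto \mathrm{qf}(A)$ is an elementary divisor ring if and only if $A$ is an elementary divisor ring.
   Context: All rings are commutative with identity. For a ring $A$ and an $A$-module $E$, $A\propto E$ is the set of pairs $(a,e)$ with componentwise addition and multiplication $(a,e)(b,f)=(ab,af+be)$. A matrix $M$ (not necessarily square) admits diagonal reduction if there are invertible $P,Q$ with $PMQ$ diagonal $(d_{ij})$ and $d_{ii}\mid d_{(i+1)(i+1)}$ for each $i$; a ring is an elementary divisor ring if every matrix over it admits diagonal reduction. *)

theory Defs
  imports "HOL-Computational_Algebra.Fraction_Field" "Jordan_Normal_Form.Matrix"
begin

definition admits_diagonal_reduction :: "'a::comm_ring_1 mat \<Rightarrow> bool" where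
  "admits_diagonal_reduction M \<longleftrightarrow>
     (\<exists>P Q. P \<in> carrier_mat (dim_row M) (dim_row M) \<and> invertible_mat P \<and>
            Q \<in> carrier_mat (dim_col M) (dim_col M) \<and> invertible_mat Q \<and>
            (\<forall>i<dim_row M. \<forall>j<dim_col M. i \<noteq> j \<longrightarrow> (P * M * Q) $$ (i, j) = 0) \<and>
            (\<forall>i. Suc i < dim_row M \<and> Suc i < dim_col M \<longrightarrow>
                 (P * M * Q) $$ (i, i) dvd (P * M * Q) $$ (Suc i, Suc i)))"

definition elementary_divisor_ring :: "'a::comm_ring_1 itself \<Rightarrow> bool" where
  "elementary_divisor_ring _ \<longleftrightarrow> (\<forall>M :: 'a mat. admits_diagonal_reduction M)"

text \<open>Elements are pairs (a, e) with a in A and e in the quotient field 'a fract,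
where A acts on qf(A) by a \<cdot> e = (a/1) e.\<close>

declare [[typedef_overloaded]]
datatype ('a::idom) triv_ext_qf = TE 'a "'a fract"

fun te_fst :: "'a::idom triv_ext_qf \<Rightarrow> 'a" where "te_fst (TE a e) = a"
fun te_snd :: "'a::idom triv_ext_qf \<Rightarrow> 'a fract" where "te_snd (TE a e) = e"

lemma te_emb_mult: "Fraction_Field.Fract (a * b) 1 = Fraction_Field.Fract a 1 * (Fraction_Field.Fract b 1 :: 'a::idom fract)"
  by simp
lemma te_emb_add: "Fraction_Field.Fract (a + b) 1 = Fraction_Field.Fract a 1 + (Fraction_Field.Fract b 1 :: 'a::idom fract)"
  by simp
lemma te_emb_one: "Fraction_Field.Fract 1 1 = (1 :: 'a::idom fract)"
  by (simp add: One_fract_def)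

instantiation triv_ext_qf :: (idom) comm_ring_1
begin

definition zero_triv_ext_qf :: "'a triv_ext_qf" where "0 = TE 0 0"
definition one_triv_ext_qf :: "'a triv_ext_qf" where "1 = TE 1 0"
definition plus_triv_ext_qf :: "'a triv_ext_qf \<Rightarrow> 'a triv_ext_qf \<Rightarrow> 'a triv_ext_qf" where
  "x + y = TE (te_fst x + te_fst y) (te_snd x + te_snd y)"
definition uminus_triv_ext_qf :: "'a triv_ext_qf \<Rightarrow> 'a triv_ext_qf" where
  "- x = TE (- te_fst x) (- te_snd x)"
definition minus_triv_ext_qf :: "'a triv_ext_qf \<Rightarrow> 'a triv_ext_qf \<Rightarrow> 'a triv_ext_qf" where
  "x - y = TE (te_fst x - te_fst y) (te_snd x - te_snd y)"
definition times_triv_ext_qf :: "'a triv_ext_qf \<Rightarrow> 'a triv_ext_qf \<Rightarrow> 'a triv_ext_qf" where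
  "x * y = TE (te_fst x * te_fst y)
              (Fraction_Field.Fract (te_fst x) 1 * te_snd y + Fraction_Field.Fract (te_fst y) 1 * te_snd x)"

instance
proof
  fix a b c :: "'a triv_ext_qf"
  show "a * b * c = a * (b * c)"
    by (cases a; cases b; cases c)
       (simp add: times_triv_ext_qf_def algebra_simps)
  show "a * b = b * a"
    by (cases a; cases b) (simp add: times_triv_ext_qf_def algebra_simps)
  show "1 * a = a"
    by (cases a) (simp add: times_triv_ext_qf_def one_triv_ext_qf_def te_emb_one)
  show "(a + b) * c = a * c + b * c"
    by (cases a; cases b; cases c)
       (simp add: times_triv_ext_qf_def plus_triv_ext_qf_def algebra_simps,
        simp only: te_emb_add distrib_left)
  show "a + b + c = a + (b + c)"
    by (cases a; cases b; cases c) (simp add: plus_triv_ext_qf_def algebra_simps)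
  show "a + b = b + a"
    by (cases a; cases b) (simp add: plus_triv_ext_qf_def algebra_simps)
  show "0 + a = a"
    by (cases a) (simp add: plus_triv_ext_qf_def zero_triv_ext_qf_def)
  show "- a + a = 0"
    by (cases a) (simp add: plus_triv_ext_qf_def uminus_triv_ext_qf_def zero_triv_ext_qf_def)
  show "a - b = a + - b"
    by (cases a; cases b)
       (simp add: plus_triv_ext_qf_def uminus_triv_ext_qf_def minus_triv_ext_qf_def)
  show "(0::'a triv_ext_qf) \<noteq> 1"
    by (simp add: zero_triv_ext_qf_def one_triv_ext_qf_def)
qed

end

end

theory Submission
  imports Defs "HOL-Computational_Algebra.Polynomial_Factorial"
begin

(* Write K for qf(A) and (a, e) = a + \<epsilon>e.  The projection a + \<epsilon>e \<mapsto> a is a surjective ring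
   homomorphism, and homomorphic images of elementary divisor rings are elementary divisor
   rings; this gives one direction.

   Conversely, write a matrix over A \<propto> K as X + \<epsilon>Y.  Diagonalize X over A; the result is
   diag(d_1, ..., d_r) \<oplus> 0 with all d_i \<noteq> 0, since a zero on a divisor chain propagates.
   The d_i are invertible in K, so multiplying by the unipotent matrices 1 - \<epsilon>C clears the
   \<epsilon>-part in the first r rows and columns, leaving diag(d_1, ..., d_r) \<oplus> \<epsilon>Y'.  After clearing
   denominators, Y' = c X' with X' over A, and diagonalizing X' over A yields
   diag(d_1, ..., d_r, \<epsilon>c b_1, \<epsilon>c b_2, ...).  This is a divisor chain because (d, 0)
   divides every (0, e) once d \<noteq> 0. *)

section \<open>Equivalent matrices and diagonal reduction\<close>

lemma index_mult_mat_sum: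
  "i < dim_row A \<Longrightarrow> j < dim_col B \<Longrightarrow> dim_col A = dim_row B \<Longrightarrow>
    (A * B) $$ (i, j) = (\<Sum>l<dim_row B. A $$ (i, l) * B $$ (l, j))"
  by (simp add: scalar_prod_def atLeast0LessThan)

lemma index_mult_partial_diag_right:
  fixes A :: "'a :: semiring_0 mat"
  assumes "A \<in> carrier_mat m k" "E \<in> carrier_mat k n" "r \<le> k" "i < m" "j < n"
    and E: "\<And>l. l < k \<Longrightarrow> E $$ (l, j) = (if l = j \<and> j < r then e j else 0)"
  shows "(A * E) $$ (i, j) = (if j < r then A $$ (i, j) * e j else 0)"
proof -
  have "(A * E) $$ (i, j) = (\<Sum>l<k. A $$ (i, l) * (if l = j \<and> j < r then e j else 0))"
    using assms by (simp add: index_mult_mat_sum E del: index_mult_mat(1))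
  also have "\<dots> = (if j < r then A $$ (i, j) * e j else 0)"
    using assms(3) by (simp add: if_distrib[of "\<lambda>x. _ * x"] sum.delta' cong: if_cong)
  finally show ?thesis .
qed

lemma index_mult_partial_diag_left:
  fixes B :: "'a :: semiring_0 mat"
  assumes "E \<in> carrier_mat m k" "B \<in> carrier_mat k n" "r \<le> k" "i < m" "j < n"
    and E: "\<And>l. l < k \<Longrightarrow> E $$ (i, l) = (if l = i \<and> i < r then e i else 0)"
  shows "(E * B) $$ (i, j) = (if i < r then e i * B $$ (i, j) else 0)"
proof -
  have "(E * B) $$ (i, j) = (\<Sum>l<k. (if l = i \<and> i < r then e i else 0) * B $$ (l, j))"
    using assms by (simp add: index_mult_mat_sum E del: index_mult_mat(1))
  also have "\<dots> = (if i < r then e i * B $$ (i, j) else 0)"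
    using assms(3) by (simp add: if_distrib[of "\<lambda>x. x * _"] sum.delta cong: if_cong)
  finally show ?thesis .
qed

lemma invertible_matI:
  assumes "P \<in> carrier_mat n n" "Q \<in> carrier_mat n n" "P * Q = 1\<^sub>m n" "Q * P = 1\<^sub>m n"
  shows "invertible_mat P"
  using assms unfolding invertible_mat_def inverts_mat_def square_mat.simps carrier_mat_def by auto

lemma invertible_matE:
  assumes "invertible_mat P" "P \<in> carrier_mat n n"
  obtains Q where "Q \<in> carrier_mat n n" "P * Q = 1\<^sub>m n" "Q * P = 1\<^sub>m n"
proof -
  obtain Q where Q: "P * Q = 1\<^sub>m n" "Q * P = 1\<^sub>m (dim_row Q)"
    using assms unfolding invertible_mat_def inverts_mat_def by auto
  then have "Q \<in> carrier_mat n n"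
    using assms(2) by (metis carrier_matD(2) carrier_matI index_mult_mat(3) index_one_mat(3))
  with Q that show thesis by auto
qed

lemma invertible_mat_mult:
  assumes "invertible_mat P" "invertible_mat Q" "P \<in> carrier_mat n n" "Q \<in> carrier_mat n n"
  shows "invertible_mat (P * Q)"
proof -
  obtain P' where P': "P' \<in> carrier_mat n n" "P * P' = 1\<^sub>m n" "P' * P = 1\<^sub>m n"
    using assms(1,3) by (rule invertible_matE)
  obtain Q' where Q': "Q' \<in> carrier_mat n n" "Q * Q' = 1\<^sub>m n" "Q' * Q = 1\<^sub>m n"
    using assms(2,4) by (rule invertible_matE)
  have "P * Q * (Q' * P') = P * (Q * Q') * P'"
    using assms(3,4) P'(1) Q'(1) by (simp add: assoc_mult_mat[of _ n n _ n _ n])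
  moreover have "Q' * P' * (P * Q) = Q' * (P' * P) * Q"
    using assms(3,4) P'(1) Q'(1) by (simp add: assoc_mult_mat[of _ n n _ n _ n])
  ultimately show ?thesis
    using assms P' Q' by (intro invertible_matI[of _ n "Q' * P'"]) auto
qed

lemma invertible_four_block_mat_one:
  fixes P :: "'a :: semiring_1 mat"
  assumes "invertible_mat P" "P \<in> carrier_mat k k"
  shows "invertible_mat (four_block_mat (1\<^sub>m r) (0\<^sub>m r k) (0\<^sub>m k r) P)"
proof -
  obtain P' where P': "P' \<in> carrier_mat k k" "P * P' = 1\<^sub>m k" "P' * P = 1\<^sub>m k"
    using assms by (rule invertible_matE)
  define B :: "'a mat \<Rightarrow> 'a mat" where "B X = four_block_mat (1\<^sub>m r) (0\<^sub>m r k) (0\<^sub>m k r) X" for X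
  have "B X * B Y = B (X * Y)" if "X \<in> carrier_mat k k" "Y \<in> carrier_mat k k" for X Y
    unfolding B_def using that
    by (simp add: mult_four_block_mat[OF one_carrier_mat zero_carrier_mat zero_carrier_mat that(1)
        one_carrier_mat zero_carrier_mat zero_carrier_mat that(2)])
  then show ?thesis
    using assms P' by (intro invertible_matI[of _ "r + k" "B P'"]) (auto simp: B_def)
qed

definition equivalent_mat :: "'a :: semiring_1 mat \<Rightarrow> 'a mat \<Rightarrow> bool" where
  "equivalent_mat M N \<longleftrightarrow>
     (\<exists>P Q. P \<in> carrier_mat (dim_row M) (dim_row M) \<and> invertible_mat P \<and>
            Q \<in> carrier_mat (dim_col M) (dim_col M) \<and> invertible_mat Q \<and> N = P * M * Q)"

definition diagonal_divisor_chain :: "'a :: comm_ring_1 mat \<Rightarrow> bool" where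
  "diagonal_divisor_chain D \<longleftrightarrow> diagonal_mat D \<and>
     (\<forall>i. Suc i < dim_row D \<and> Suc i < dim_col D \<longrightarrow> D $$ (i, i) dvd D $$ (Suc i, Suc i))"

lemma admits_diagonal_reduction_iff:
  "admits_diagonal_reduction M \<longleftrightarrow> (\<exists>N. equivalent_mat M N \<and> diagonal_divisor_chain N)"
proof
  assume "admits_diagonal_reduction M"
  then obtain P Q where "P \<in> carrier_mat (dim_row M) (dim_row M)" "invertible_mat P"
    "Q \<in> carrier_mat (dim_col M) (dim_col M)" "invertible_mat Q"
    "diagonal_divisor_chain (P * M * Q)"
    unfolding admits_diagonal_reduction_def diagonal_divisor_chain_def diagonal_mat_def
    by (auto simp del: index_mult_mat(1))
  then show "\<exists>N. equivalent_mat M N \<and> diagonal_divisor_chain N"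
    unfolding equivalent_mat_def by blast
next
  assume "\<exists>N. equivalent_mat M N \<and> diagonal_divisor_chain N"
  then obtain P Q where "P \<in> carrier_mat (dim_row M) (dim_row M)" "invertible_mat P"
    "Q \<in> carrier_mat (dim_col M) (dim_col M)" "invertible_mat Q"
    "diagonal_divisor_chain (P * M * Q)"
    unfolding equivalent_mat_def by blast
  then show "admits_diagonal_reduction M"
    unfolding admits_diagonal_reduction_def diagonal_divisor_chain_def diagonal_mat_def
    by (auto simp del: index_mult_mat(1))
qed

lemma equivalent_mat_carrier:
  assumes "equivalent_mat M N" "M \<in> carrier_mat m n"
  shows "N \<in> carrier_mat m n"
  using assms unfolding equivalent_mat_def by auto

lemma equivalent_mat_trans:
  assumes MN: "equivalent_mat M N" and NK: "equivalent_mat N K"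
  shows "equivalent_mat M K"
proof -
  define m n where "m = dim_row M" and "n = dim_col M"
  have M: "M \<in> carrier_mat m n" unfolding m_def n_def by (rule carrier_matI) simp_all
  obtain P Q where P: "P \<in> carrier_mat m m" "invertible_mat P"
    and Q: "Q \<in> carrier_mat n n" "invertible_mat Q" and N: "N = P * M * Q"
    using MN unfolding equivalent_mat_def m_def n_def by blast
  have "N \<in> carrier_mat m n" using MN M by (rule equivalent_mat_carrier)
  then obtain P' Q' where P': "P' \<in> carrier_mat m m" "invertible_mat P'"
    and Q': "Q' \<in> carrier_mat n n" "invertible_mat Q'" and K: "K = P' * N * Q'"
    using NK unfolding equivalent_mat_def by auto
  have PM: "P * M \<in> carrier_mat m n" using P M by simp
  have "K = P' * (P * M * Q) * Q'" by (simp add: K N)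
  also have "P' * (P * M * Q) = P' * (P * M) * Q"
    using P'(1) PM Q(1) by (rule assoc_mult_mat[symmetric])
  also have "P' * (P * M) = P' * P * M"
    using P'(1) P(1) M by (rule assoc_mult_mat[symmetric])
  also have "P' * P * M * Q * Q' = P' * P * M * (Q * Q')"
    using P'(1) P(1) M Q(1) Q'(1) by (intro assoc_mult_mat) auto
  finally have "K = P' * P * M * (Q * Q')" .
  moreover have "invertible_mat (P' * P)" "invertible_mat (Q * Q')"
    using P Q P' Q' by (auto intro!: invertible_mat_mult)
  ultimately show ?thesis
    using P Q P' Q' unfolding equivalent_mat_def m_def[symmetric] n_def[symmetric]
    by (intro exI[of _ "P' * P"] exI[of _ "Q * Q'"]) auto
qed

lemma admits_diagonal_reduction_equivalent:
  "equivalent_mat M N \<Longrightarrow> admits_diagonal_reduction N \<Longrightarrow> admits_diagonal_reduction M"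
  unfolding admits_diagonal_reduction_iff by (blast intro: equivalent_mat_trans)

lemma equivalent_mat_four_block_diag:
  assumes XY: "equivalent_mat X Y" and X: "X \<in> carrier_mat m n" and Z: "Z \<in> carrier_mat r s"
  shows "equivalent_mat (four_block_mat Z (0\<^sub>m r n) (0\<^sub>m m s) X) (four_block_mat Z (0\<^sub>m r n) (0\<^sub>m m s) Y)"
proof -
  obtain P Q where P: "P \<in> carrier_mat m m" "invertible_mat P"
    and Q: "Q \<in> carrier_mat n n" "invertible_mat Q" and Y: "Y = P * X * Q"
    using XY X unfolding equivalent_mat_def by auto
  define P2 where "P2 = four_block_mat (1\<^sub>m r) (0\<^sub>m r m) (0\<^sub>m m r) P"
  define Q2 where "Q2 = four_block_mat (1\<^sub>m s) (0\<^sub>m s n) (0\<^sub>m n s) Q"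
  have "P2 * four_block_mat Z (0\<^sub>m r n) (0\<^sub>m m s) X = four_block_mat Z (0\<^sub>m r n) (0\<^sub>m m s) (P * X)"
    unfolding P2_def using P X Z
    by (simp add: mult_four_block_mat[OF one_carrier_mat zero_carrier_mat zero_carrier_mat P(1)
          Z zero_carrier_mat zero_carrier_mat X])
  moreover have "four_block_mat Z (0\<^sub>m r n) (0\<^sub>m m s) (P * X) * Q2 = four_block_mat Z (0\<^sub>m r n) (0\<^sub>m m s) Y"
    unfolding Q2_def Y using P Q X Z
    by (simp add: mult_four_block_mat[OF Z zero_carrier_mat zero_carrier_mat mult_carrier_mat[OF P(1) X]
          one_carrier_mat zero_carrier_mat zero_carrier_mat Q(1)])
  ultimately show ?thesis
    unfolding equivalent_mat_def using P Q X Z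
    by (intro exI[of _ P2] exI[of _ Q2])
       (auto simp: P2_def Q2_def intro: invertible_four_block_mat_one)
qed

lemma diagonal_divisor_chain_nonzero_prefix:
  assumes chain: "diagonal_divisor_chain D" and D: "D \<in> carrier_mat m n"
  obtains r where "r \<le> min m n" "\<forall>i<r. D $$ (i, i) \<noteq> 0"
    "\<forall>i. r \<le> i \<and> i < min m n \<longrightarrow> D $$ (i, i) = 0"
proof
  define r where "r = (LEAST i. \<not> (i < min m n \<and> D $$ (i, i) \<noteq> 0))"
  show r_le: "r \<le> min m n"
    unfolding r_def by (rule Least_le) simp
  show "\<forall>i<r. D $$ (i, i) \<noteq> 0"
  proof (intro allI impI)
    fix i assume "i < r"
    then show "D $$ (i, i) \<noteq> 0" using not_less_Least[OF \<open>i < r\<close>[unfolded r_def]] by simp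
  qed
  have "D $$ (i, i) = 0" if "r \<le> i" "i < min m n" for i
    using that
  proof (induction i rule: dec_induct)
    case base
    show ?case using LeastI[of "\<lambda>i. \<not> (i < min m n \<and> D $$ (i, i) \<noteq> 0)" "min m n"] base
      by (simp add: r_def)
  next
    case (step i)
    then have "D $$ (i, i) dvd D $$ (Suc i, Suc i)"
      using chain D unfolding diagonal_divisor_chain_def by auto
    with step show ?case by simp
  qed
  then show "\<forall>i. r \<le> i \<and> i < min m n \<longrightarrow> D $$ (i, i) = 0" by blast
qed

lemma diagonal_divisor_chain_split:
  fixes D :: "'a :: comm_ring_1 mat"
  assumes chain: "diagonal_divisor_chain D" and D: "D \<in> carrier_mat m n"
  obtains r Dr where "r \<le> m" "r \<le> n" "Dr \<in> carrier_mat r r" "diagonal_divisor_chain Dr"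
    "\<forall>i<r. Dr $$ (i, i) \<noteq> 0"
    "D = four_block_mat Dr (0\<^sub>m r (n - r)) (0\<^sub>m (m - r) r) (0\<^sub>m (m - r) (n - r))"
proof -
  obtain r where r_le: "r \<le> min m n" and nonzero: "\<forall>i<r. D $$ (i, i) \<noteq> 0"
    and zero: "\<forall>i. r \<le> i \<and> i < min m n \<longrightarrow> D $$ (i, i) = 0"
    using chain D by (rule diagonal_divisor_chain_nonzero_prefix)
  have off_diag: "D $$ (i, j) = 0" if "i < m" "j < n" "i \<noteq> j" for i j
    using chain D that unfolding diagonal_divisor_chain_def diagonal_mat_def by auto
  have dvd_next: "D $$ (i, i) dvd D $$ (Suc i, Suc i)" if "Suc i < m" "Suc i < n" for i
    using chain D that unfolding diagonal_divisor_chain_def by auto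
  define Dr where "Dr = mat r r (\<lambda>ij. D $$ ij)"
  have Dr: "Dr \<in> carrier_mat r r" by (simp add: Dr_def)
  have "D = four_block_mat Dr (0\<^sub>m r (n - r)) (0\<^sub>m (m - r) r) (0\<^sub>m (m - r) (n - r))"
  proof (rule eq_matI)
    fix i j assume "i < dim_row (four_block_mat Dr (0\<^sub>m r (n - r)) (0\<^sub>m (m - r) r) (0\<^sub>m (m - r) (n - r)))"
      "j < dim_col (four_block_mat Dr (0\<^sub>m r (n - r)) (0\<^sub>m (m - r) r) (0\<^sub>m (m - r) (n - r)))"
    then have ij: "i < m" "j < n" using r_le Dr by auto
    show "D $$ (i, j) = four_block_mat Dr (0\<^sub>m r (n - r)) (0\<^sub>m (m - r) r) (0\<^sub>m (m - r) (n - r)) $$ (i, j)"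
      using ij r_le off_diag[OF ij] zero by (cases "i = j") (auto simp: Dr_def)
  qed (use D r_le in \<open>auto simp: Dr_def\<close>)
  moreover have "diagonal_divisor_chain Dr"
    unfolding diagonal_divisor_chain_def diagonal_mat_def
  proof (intro conjI allI impI)
    fix i j assume "i < dim_row Dr" "j < dim_col Dr" "i \<noteq> j"
    then show "Dr $$ (i, j) = 0" using r_le by (simp add: Dr_def off_diag)
  next
    fix i assume "Suc i < dim_row Dr \<and> Suc i < dim_col Dr"
    then show "Dr $$ (i, i) dvd Dr $$ (Suc i, Suc i)" using r_le by (simp add: Dr_def dvd_next)
  qed
  moreover have "\<forall>i<r. Dr $$ (i, i) \<noteq> 0" using nonzero by (simp add: Dr_def)
  ultimately show thesis
    using r_le Dr by (intro that[of r Dr]) simp_all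
qed

context semiring_hom
begin

lemma invertible_mat_hom:
  assumes "invertible_mat P" "P \<in> carrier_mat n n"
  shows "invertible_mat (mat\<^sub>h P)"
proof -
  obtain Q where Q: "Q \<in> carrier_mat n n" "P * Q = 1\<^sub>m n" "Q * P = 1\<^sub>m n"
    using assms by (rule invertible_matE)
  have "mat\<^sub>h P * mat\<^sub>h Q = 1\<^sub>m n" "mat\<^sub>h Q * mat\<^sub>h P = 1\<^sub>m n"
    using mat_hom_mult[OF assms(2) Q(1)] mat_hom_mult[OF Q(1) assms(2)] Q(2,3)
    by (simp_all add: mat_hom_one)
  then show ?thesis
    using Q(1) assms(2) by (intro invertible_matI[of _ n "mat\<^sub>h Q"]) simp_all
qed

lemma equivalent_mat_hom:
  assumes "equivalent_mat M N"
  shows "equivalent_mat (mat\<^sub>h M) (mat\<^sub>h N)"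
proof -
  define m n where "m = dim_row M" and "n = dim_col M"
  have M: "M \<in> carrier_mat m n" unfolding m_def n_def by (rule carrier_matI) simp_all
  obtain P Q where P: "P \<in> carrier_mat m m" "invertible_mat P"
    and Q: "Q \<in> carrier_mat n n" "invertible_mat Q" and N: "N = P * M * Q"
    using assms unfolding equivalent_mat_def m_def n_def by blast
  have "mat\<^sub>h N = mat\<^sub>h P * mat\<^sub>h M * mat\<^sub>h Q"
    unfolding N mat_hom_mult[OF mult_carrier_mat[OF P(1) M] Q(1)] mat_hom_mult[OF P(1) M] ..
  moreover have "invertible_mat (mat\<^sub>h P)" "invertible_mat (mat\<^sub>h Q)"
    using P Q by (simp_all add: invertible_mat_hom)
  ultimately show ?thesis
    unfolding equivalent_mat_def using P(1) Q(1)
    by (intro exI[of _ "mat\<^sub>h P"] exI[of _ "mat\<^sub>h Q"]) (auto simp: m_def n_def)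
qed

end

lemma (in comm_ring_hom) diagonal_divisor_chain_hom:
  "diagonal_divisor_chain D \<Longrightarrow> diagonal_divisor_chain (mat\<^sub>h D)"
  unfolding diagonal_divisor_chain_def diagonal_mat_def by simp

lemma (in comm_ring_hom) admits_diagonal_reduction_hom:
  "admits_diagonal_reduction M \<Longrightarrow> admits_diagonal_reduction (mat\<^sub>h M)"
  unfolding admits_diagonal_reduction_iff
  using equivalent_mat_hom diagonal_divisor_chain_hom by blast

lemma elementary_divisor_ring_surj_hom:
  fixes h :: "'a :: comm_ring_1 \<Rightarrow> 'b :: comm_ring_1"
  assumes "comm_ring_hom h" "surj h" "elementary_divisor_ring TYPE('a)"
  shows "elementary_divisor_ring TYPE('b)"
  unfolding elementary_divisor_ring_def
proof
  fix M :: "'b mat"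
  obtain g where g: "\<And>b. h (g b) = b" using assms(2) by (metis surjD)
  have "M = map_mat h (map_mat g M)"
    by (rule eq_matI) (simp_all add: g)
  moreover have "admits_diagonal_reduction (map_mat g M)"
    using assms(3) unfolding elementary_divisor_ring_def ..
  ultimately show "admits_diagonal_reduction M"
    using comm_ring_hom.admits_diagonal_reduction_hom[OF assms(1)] by metis
qed

lemma equivalent_mat_lift_retraction:
  fixes h :: "'a :: comm_ring_1 \<Rightarrow> 'b :: comm_ring_1"
  assumes h: "semiring_hom h" and g: "semiring_hom g" and retraction: "\<And>b. h (g b) = b"
    and equiv: "equivalent_mat (map_mat h M) D"
  obtains F where "equivalent_mat M F" "map_mat h F = D"
proof -
  define m n where "m = dim_row M" and "n = dim_col M"
  have M: "M \<in> carrier_mat m n" unfolding m_def n_def by (rule carrier_matI) simp_all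
  obtain P Q where P: "P \<in> carrier_mat m m" "invertible_mat P"
    and Q: "Q \<in> carrier_mat n n" "invertible_mat Q" and D: "D = P * map_mat h M * Q"
    using equiv unfolding equivalent_mat_def m_def n_def by auto
  have gP: "map_mat g P \<in> carrier_mat m m" and gQ: "map_mat g Q \<in> carrier_mat n n"
    using P(1) Q(1) by auto
  have hg: "map_mat h (map_mat g X) = X" for X
    by (rule eq_matI) (simp_all add: retraction)
  have "invertible_mat (map_mat g P)" "invertible_mat (map_mat g Q)"
    using P Q by (simp_all add: semiring_hom.invertible_mat_hom[OF g])
  then have "equivalent_mat M (map_mat g P * M * map_mat g Q)"
    unfolding equivalent_mat_def using gP gQ
    by (intro exI[of _ "map_mat g P"] exI[of _ "map_mat g Q"]) (auto simp: m_def n_def)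
  moreover have "map_mat h (map_mat g P * M * map_mat g Q) = D"
    unfolding D semiring_hom.mat_hom_mult[OF h mult_carrier_mat[OF gP M] gQ]
      semiring_hom.mat_hom_mult[OF h gP M] hg ..
  ultimately show thesis by (rule that)
qed

section \<open>The trivial extension by the quotient field\<close>

lemma common_denominator:
  fixes X :: "'a :: idom fract set"
  assumes "finite X"
  shows "\<exists>s. s \<noteq> 0 \<and> (\<forall>x\<in>X. to_fract s * x \<in> range to_fract)"
  using assms
proof (induction X rule: finite_induct)
  case empty
  show ?case by (intro exI[of _ 1]) simp
next
  case (insert x X)
  then obtain s where s: "s \<noteq> 0" "\<forall>y\<in>X. to_fract s * y \<in> range to_fract" by blast
  obtain a b where x: "x = Fraction_Field.Fract a b" "b \<noteq> 0" by (cases x)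
  have "to_fract (s * b) * x = to_fract (s * a)"
    using x by (simp add: to_fract_def eq_fract)
  then have "to_fract (s * b) * x \<in> range to_fract" by (metis rangeI)
  moreover have "to_fract (s * b) * y \<in> range to_fract" if "y \<in> X" for y
  proof -
    obtain c where "to_fract s * y = to_fract c" using s(2) \<open>y \<in> X\<close> by blast
    then have "to_fract (s * b) * y = to_fract (b * c)" by (simp add: ac_simps)
    then show ?thesis by (metis rangeI)
  qed
  moreover have "s * b \<noteq> 0" using s x by simp
  ultimately show ?case by blast
qed

lemma fract_mat_common_denominator:
  fixes H :: "'a :: idom fract mat"
  obtains c X where "X \<in> carrier_mat (dim_row H) (dim_col H)" "H = c \<cdot>\<^sub>m map_mat to_fract X"
proof -
  obtain s where s: "s \<noteq> 0"
    and int: "\<forall>x\<in>(\<lambda>ij. H $$ ij) ` ({..<dim_row H} \<times> {..<dim_col H}). to_fract s * x \<in> range to_fract"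
    using common_denominator[of "(\<lambda>ij. H $$ ij) ` ({..<dim_row H} \<times> {..<dim_col H})"] by auto
  define X where "X = mat (dim_row H) (dim_col H) (\<lambda>ij. SOME a. to_fract s * H $$ ij = to_fract a)"
  have "H = inverse (to_fract s) \<cdot>\<^sub>m map_mat to_fract X"
  proof (rule eq_matI)
    fix i j assume ij: "i < dim_row (inverse (to_fract s) \<cdot>\<^sub>m map_mat to_fract X)"
      "j < dim_col (inverse (to_fract s) \<cdot>\<^sub>m map_mat to_fract X)"
    then have "i < dim_row H" "j < dim_col H" by (simp_all add: X_def)
    then have "H $$ (i, j) \<in> (\<lambda>ij. H $$ ij) ` ({..<dim_row H} \<times> {..<dim_col H})" by auto
    then have "\<exists>a. to_fract s * H $$ (i, j) = to_fract a"
      using int by (metis rangeE)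
    then have "to_fract s * H $$ (i, j) = to_fract (SOME a. to_fract s * H $$ (i, j) = to_fract a)"
      by (rule someI_ex)
    then have "to_fract (X $$ (i, j)) = to_fract s * H $$ (i, j)"
      using \<open>i < dim_row H\<close> \<open>j < dim_col H\<close> by (simp add: X_def)
    then show "H $$ (i, j) = (inverse (to_fract s) \<cdot>\<^sub>m map_mat to_fract X) $$ (i, j)"
      using ij s by (simp add: X_def field_simps)
  qed (simp_all add: X_def)
  then show thesis by (intro that[of X]) (simp_all add: X_def)
qed

lemma te_fst_add [simp]: "te_fst (x + y) = te_fst x + te_fst y"
  and te_snd_add [simp]: "te_snd (x + y) = te_snd x + te_snd y"
  and te_fst_mult [simp]: "te_fst (x * y) = te_fst x * te_fst y"
  and te_snd_mult [simp]: "te_snd (x * y) = to_fract (te_fst x) * te_snd y + te_snd x * to_fract (te_fst y)"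
  and te_fst_zero [simp]: "te_fst 0 = 0"
  and te_snd_zero [simp]: "te_snd 0 = 0"
  and te_fst_one [simp]: "te_fst 1 = 1"
  and te_snd_one [simp]: "te_snd 1 = 0"
  by (simp_all add: plus_triv_ext_qf_def times_triv_ext_qf_def zero_triv_ext_qf_def
      one_triv_ext_qf_def to_fract_def ac_simps)

lemma triv_ext_qf_eqI: "te_fst x = te_fst y \<Longrightarrow> te_snd x = te_snd y \<Longrightarrow> x = y"
  by (cases x; cases y) simp

definition te_embed :: "'a :: idom \<Rightarrow> 'a triv_ext_qf" where
  "te_embed a = TE a 0"

interpretation te_fst: comm_ring_hom te_fst
  by unfold_locales simp_all

interpretation te_snd: comm_monoid_add_hom te_snd
  by unfold_locales simp_all

interpretation te_embed: comm_ring_hom te_embed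
  by unfold_locales (simp_all add: triv_ext_qf_eqI te_embed_def)

interpretation to_fract: comm_ring_hom to_fract
  by unfold_locales simp_all

lemma te_fst_surj: "surj te_fst"
  by (rule surjI[of _ "\<lambda>a. TE a 0"]) simp

definition te_mat :: "'a :: idom mat \<Rightarrow> 'a fract mat \<Rightarrow> 'a triv_ext_qf mat" where
  "te_mat X Y = mat (dim_row X) (dim_col X) (\<lambda>ij. TE (X $$ ij) (Y $$ ij))"

lemma dim_te_mat [simp]: "dim_row (te_mat X Y) = dim_row X" "dim_col (te_mat X Y) = dim_col X"
  by (simp_all add: te_mat_def)

lemma index_te_mat [simp]:
  "i < dim_row X \<Longrightarrow> j < dim_col X \<Longrightarrow> te_mat X Y $$ (i, j) = TE (X $$ (i, j)) (Y $$ (i, j))"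
  by (simp add: te_mat_def)

lemma te_mat_carrier [simp]: "te_mat X Y \<in> carrier_mat m n \<longleftrightarrow> X \<in> carrier_mat m n"
  unfolding carrier_mat_def by simp

lemma te_mat_decompose: "M = te_mat (map_mat te_fst M) (map_mat te_snd M)"
  by (rule eq_matI) (simp_all add: triv_ext_qf_eqI)

lemma map_mat_te_embed: "map_mat te_embed X = te_mat X (0\<^sub>m (dim_row X) (dim_col X))"
  by (rule eq_matI) (simp_all add: te_embed_def)

lemma one_te_mat: "1\<^sub>m n = te_mat (1\<^sub>m n) (0\<^sub>m n n)"
  by (rule eq_matI) (simp_all add: triv_ext_qf_eqI)

lemma te_mat_mult:
  assumes "X \<in> carrier_mat m k" "Y \<in> carrier_mat m k" "X' \<in> carrier_mat k n" "Y' \<in> carrier_mat k n"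
  shows "te_mat X Y * te_mat X' Y' = te_mat (X * X') (map_mat to_fract X * Y' + Y * map_mat to_fract X')"
proof (rule eq_matI)
  fix i j assume "i < dim_row (te_mat (X * X') (map_mat to_fract X * Y' + Y * map_mat to_fract X'))"
    "j < dim_col (te_mat (X * X') (map_mat to_fract X * Y' + Y * map_mat to_fract X'))"
  then have ij: "i < m" "j < n" using assms by auto
  have prod: "(te_mat X Y * te_mat X' Y') $$ (i, j) = (\<Sum>l<k. TE (X $$ (i, l)) (Y $$ (i, l)) * TE (X' $$ (l, j)) (Y' $$ (l, j)))"
    using ij assms by (simp add: index_mult_mat_sum del: index_mult_mat(1))
  have "te_fst ((te_mat X Y * te_mat X' Y') $$ (i, j)) = (X * X') $$ (i, j)"
    unfolding prod te_fst.hom_sum using ij assms by (simp add: index_mult_mat_sum del: index_mult_mat(1))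
  moreover have "te_snd ((te_mat X Y * te_mat X' Y') $$ (i, j)) =
      (map_mat to_fract X * Y' + Y * map_mat to_fract X') $$ (i, j)"
    unfolding prod te_snd.hom_sum using ij assms
    by (simp add: index_mult_mat_sum sum.distrib del: index_mult_mat(1))
  ultimately show "(te_mat X Y * te_mat X' Y') $$ (i, j) =
      te_mat (X * X') (map_mat to_fract X * Y' + Y * map_mat to_fract X') $$ (i, j)"
    using ij assms by (simp add: triv_ext_qf_eqI)
qed (use assms in auto)

lemma invertible_te_mat_one:
  assumes C: "C \<in> carrier_mat n n"
  shows "invertible_mat (te_mat (1\<^sub>m n) C)"
proof -
  have inverse: "te_mat (1\<^sub>m n) C' * te_mat (1\<^sub>m n) (- C') = 1\<^sub>m n" if "C' \<in> carrier_mat n n" for C'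
  proof -
    have "te_mat (1\<^sub>m n) C' * te_mat (1\<^sub>m n) (- C') = te_mat (1\<^sub>m n) (- C' + C')"
      using that by (simp add: te_mat_mult[OF one_carrier_mat that one_carrier_mat uminus_carrier_mat[OF that]]
          to_fract.mat_hom_one)
    also have "- C' + C' = 0\<^sub>m n n" using that by simp
    finally show ?thesis by (simp flip: one_te_mat)
  qed
  show ?thesis
    using inverse[OF C] inverse[OF uminus_carrier_mat[OF C]] C
    by (intro invertible_matI[of _ n "te_mat (1\<^sub>m n) (- C)"]) simp_all
qed

section \<open>Diagonal reduction over the trivial extension\<close>

lemma equivalent_te_mat_eps_shift:
  assumes D: "D \<in> carrier_mat m n" and G: "G \<in> carrier_mat m n"
    and C: "C \<in> carrier_mat m m" and C': "C' \<in> carrier_mat n n"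
  shows "equivalent_mat (te_mat D G) (te_mat D (G + C * map_mat to_fract D + map_mat to_fract D * C'))"
proof -
  have eD: "map_mat to_fract D \<in> carrier_mat m n" using D by simp
  have "te_mat (1\<^sub>m m) C * te_mat D G = te_mat D (G + C * map_mat to_fract D)"
    using te_mat_mult[OF one_carrier_mat C D G] D G by (simp add: to_fract.mat_hom_one)
  also have "\<dots> * te_mat (1\<^sub>m n) C' = te_mat D (map_mat to_fract D * C' + (G + C * map_mat to_fract D))"
    using te_mat_mult[OF D _ one_carrier_mat C', of "G + C * map_mat to_fract D"] C D G
    by (simp add: to_fract.mat_hom_one)
  also have "map_mat to_fract D * C' + (G + C * map_mat to_fract D) =
      G + C * map_mat to_fract D + map_mat to_fract D * C'"
    using C C' G eD by (intro comm_add_mat) auto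
  finally show ?thesis
    unfolding equivalent_mat_def using C C' D
    by (intro exI[of _ "te_mat (1\<^sub>m m) C"] exI[of _ "te_mat (1\<^sub>m n) C'"])
       (auto intro: invertible_te_mat_one)
qed

text \<open>The diagonal entries of Dr are units of the quotient field, so \<open>\<epsilon>\<close>-multiples of the
  columns and rows of D can clear the \<open>\<epsilon>\<close>-part in the first r rows and columns.\<close>

lemma te_mat_clear_eps_border:
  fixes Dr :: "'a :: idom mat" and G :: "'a fract mat" and r m' n' :: nat
  defines "D \<equiv> four_block_mat Dr (0\<^sub>m r n') (0\<^sub>m m' r) (0\<^sub>m m' n')"
  assumes Dr: "Dr \<in> carrier_mat r r" "diagonal_mat Dr" "\<forall>i<r. Dr $$ (i, i) \<noteq> 0"
    and G: "G \<in> carrier_mat (r + m') (r + n')"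
  obtains Y where "Y \<in> carrier_mat m' n'"
    "equivalent_mat (te_mat D G) (te_mat D (four_block_mat (0\<^sub>m r r) (0\<^sub>m r n') (0\<^sub>m m' r) Y))"
proof -
  define m n where "m = r + m'" and "n = r + n'"
  have D: "D \<in> carrier_mat m n" using Dr(1) by (simp add: D_def m_def n_def)
  define d where "d i = to_fract (Dr $$ (i, i))" for i
  have eD: "map_mat to_fract D $$ (l, j) = (if l = j \<and> j < r then d j else 0)" if "l < m" "j < n" for l j
    using that Dr(1,2) unfolding diagonal_mat_def by (auto simp: D_def d_def m_def n_def)
  define C where "C = mat m m (\<lambda>(i, j). if j < r then - G $$ (i, j) / d j else 0)"
  define C' where "C' = mat n n (\<lambda>(i, j). if i < r \<and> r \<le> j then - G $$ (i, j) / d i else 0)"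
  have C: "C \<in> carrier_mat m m" and C': "C' \<in> carrier_mat n n" by (simp_all add: C_def C'_def)
  define H where "H = G + C * map_mat to_fract D + map_mat to_fract D * C'"
  have H: "H \<in> carrier_mat m n" using C C' D G by (simp add: H_def m_def n_def)
  have H_entry: "H $$ (i, j) = (if i < r \<or> j < r then 0 else G $$ (i, j))" if "i < m" "j < n" for i j
  proof -
    have "(C * map_mat to_fract D) $$ (i, j) = (if j < r then - G $$ (i, j) else 0)"
      using that C D Dr(3) eD
      by (subst index_mult_partial_diag_right[of _ m m _ n r]) (auto simp: C_def d_def m_def n_def)
    moreover have "(map_mat to_fract D * C') $$ (i, j) = (if i < r \<and> r \<le> j then - G $$ (i, j) else 0)"
      using that C' D Dr(3) eD
      by (subst index_mult_partial_diag_left[of _ m n _ n r]) (auto simp: C'_def d_def m_def n_def)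
    ultimately show ?thesis
      using that C C' D G by (simp add: H_def m_def n_def)
  qed
  have "H = four_block_mat (0\<^sub>m r r) (0\<^sub>m r n') (0\<^sub>m m' r) (mat m' n' (\<lambda>(i, j). G $$ (i + r, j + r)))"
  proof (rule eq_matI)
    fix i j
    assume "i < dim_row (four_block_mat (0\<^sub>m r r) (0\<^sub>m r n') (0\<^sub>m m' r) (mat m' n' (\<lambda>(i, j). G $$ (i + r, j + r))))"
      "j < dim_col (four_block_mat (0\<^sub>m r r) (0\<^sub>m r n') (0\<^sub>m m' r) (mat m' n' (\<lambda>(i, j). G $$ (i + r, j + r))))"
    then have "i < m" "j < n" by (simp_all add: m_def n_def)
    then show "H $$ (i, j) =
        four_block_mat (0\<^sub>m r r) (0\<^sub>m r n') (0\<^sub>m m' r) (mat m' n' (\<lambda>(i, j). G $$ (i + r, j + r))) $$ (i, j)"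
      by (simp add: H_entry m_def n_def)
  qed (use H in \<open>simp_all add: m_def n_def\<close>)
  moreover have "equivalent_mat (te_mat D G) (te_mat D H)"
    unfolding H_def using D G C C' by (intro equivalent_te_mat_eps_shift) (auto simp: m_def n_def)
  ultimately show thesis by (intro that[of "mat m' n' (\<lambda>(i, j). G $$ (i + r, j + r))"]) auto
qed

lemma te_embed_dvd_eps: "a \<noteq> 0 \<Longrightarrow> te_embed a dvd TE 0 e"
  by (rule dvdI[of _ _ "TE 0 (e / to_fract a)"]) (simp add: triv_ext_qf_eqI te_embed_def)

lemma eps_dvd_eps:
  assumes "b dvd b'"
  shows "TE 0 (c * to_fract b) dvd TE 0 (c * to_fract b')"
proof -
  obtain k where "b' = b * k" using assms by (elim dvdE)
  then have "TE 0 (c * to_fract b') = TE 0 (c * to_fract b) * te_embed k"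
    by (simp add: triv_ext_qf_eqI te_embed_def ac_simps)
  then show ?thesis by (rule dvdI)
qed

lemma te_mat_eps_sandwich:
  assumes P: "P \<in> carrier_mat m m" and Z: "Z \<in> carrier_mat m n" and Q: "Q \<in> carrier_mat n n"
  shows "map_mat te_embed P * te_mat (0\<^sub>m m n) Z * map_mat te_embed Q =
    te_mat (0\<^sub>m m n) (map_mat to_fract P * Z * map_mat to_fract Q)"
proof -
  have "map_mat te_embed P * te_mat (0\<^sub>m m n) Z = te_mat (0\<^sub>m m n) (map_mat to_fract P * Z)"
    using te_mat_mult[OF P zero_carrier_mat zero_carrier_mat Z] P Z by (simp add: map_mat_te_embed)
  moreover have "te_mat (0\<^sub>m m n) (map_mat to_fract P * Z) * map_mat te_embed Q =
      te_mat (0\<^sub>m m n) (map_mat to_fract P * Z * map_mat to_fract Q)"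
    using te_mat_mult[OF zero_carrier_mat _ Q zero_carrier_mat, of "map_mat to_fract P * Z"] P Z Q
    by (simp add: map_mat_te_embed)
  ultimately show ?thesis by simp
qed

lemma equivalent_mat_eps:
  assumes XB: "equivalent_mat X B" and X: "X \<in> carrier_mat m n"
  shows "equivalent_mat (te_mat (0\<^sub>m m n) (c \<cdot>\<^sub>m map_mat to_fract X))
    (te_mat (0\<^sub>m m n) (c \<cdot>\<^sub>m map_mat to_fract B))"
proof -
  obtain P Q where P: "P \<in> carrier_mat m m" "invertible_mat P"
    and Q: "Q \<in> carrier_mat n n" "invertible_mat Q" and B: "B = P * X * Q"
    using XB X unfolding equivalent_mat_def by auto
  have eP: "map_mat to_fract P \<in> carrier_mat m m" and eX: "map_mat to_fract X \<in> carrier_mat m n"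
    using P(1) X by auto
  have "map_mat to_fract P * (c \<cdot>\<^sub>m map_mat to_fract X) * map_mat to_fract Q =
      c \<cdot>\<^sub>m (map_mat to_fract P * map_mat to_fract X * map_mat to_fract Q)"
    using Q(1) by (simp add: mult_smult_distrib[OF eP eX] mult_smult_assoc_mat[OF mult_carrier_mat[OF eP eX]])
  also have "map_mat to_fract P * map_mat to_fract X * map_mat to_fract Q = map_mat to_fract B"
    unfolding B to_fract.mat_hom_mult[OF mult_carrier_mat[OF P(1) X] Q(1)] to_fract.mat_hom_mult[OF P(1) X] ..
  finally have "map_mat to_fract P * (c \<cdot>\<^sub>m map_mat to_fract X) * map_mat to_fract Q =
      c \<cdot>\<^sub>m map_mat to_fract B" .
  then have "map_mat te_embed P * te_mat (0\<^sub>m m n) (c \<cdot>\<^sub>m map_mat to_fract X) * map_mat te_embed Q =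
      te_mat (0\<^sub>m m n) (c \<cdot>\<^sub>m map_mat to_fract B)"
    using P(1) Q(1) X by (simp add: te_mat_eps_sandwich)
  then show ?thesis
    unfolding equivalent_mat_def using P Q
    by (intro exI[of _ "map_mat te_embed P"] exI[of _ "map_mat te_embed Q"])
       (auto intro: te_embed.invertible_mat_hom)
qed

lemma te_mat_four_block_diag:
  assumes "Dr \<in> carrier_mat r r" "Y \<in> carrier_mat m' n'"
  shows "te_mat (four_block_mat Dr (0\<^sub>m r n') (0\<^sub>m m' r) (0\<^sub>m m' n'))
      (four_block_mat (0\<^sub>m r r) (0\<^sub>m r n') (0\<^sub>m m' r) Y) =
    four_block_mat (map_mat te_embed Dr) (0\<^sub>m r n') (0\<^sub>m m' r) (te_mat (0\<^sub>m m' n') Y)"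
  by (rule eq_matI) (use assms in \<open>auto simp: te_embed_def zero_triv_ext_qf_def\<close>)

lemma diagonal_divisor_chain_te_normal_form:
  assumes Dr: "Dr \<in> carrier_mat r r" "diagonal_divisor_chain Dr" "\<forall>i<r. Dr $$ (i, i) \<noteq> 0"
    and B: "B \<in> carrier_mat m' n'" "diagonal_divisor_chain B"
  shows "diagonal_divisor_chain (four_block_mat (map_mat te_embed Dr) (0\<^sub>m r n') (0\<^sub>m m' r)
    (te_mat (0\<^sub>m m' n') (c \<cdot>\<^sub>m map_mat to_fract B)))" (is "diagonal_divisor_chain ?N")
  unfolding diagonal_divisor_chain_def diagonal_mat_def
proof (intro conjI allI impI)
  fix i j assume "i < dim_row ?N" "j < dim_col ?N" "i \<noteq> j"
  then show "?N $$ (i, j) = 0"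
    using Dr B unfolding diagonal_divisor_chain_def diagonal_mat_def
    by (auto simp: te_embed_def zero_triv_ext_qf_def)
next
  fix i assume i: "Suc i < dim_row ?N \<and> Suc i < dim_col ?N"
  consider "Suc i < r" | "i + 1 = r" | "r \<le> i" by linarith
  then show "?N $$ (i, i) dvd ?N $$ (Suc i, Suc i)"
  proof cases
    case 1
    then show ?thesis
      using Dr i unfolding diagonal_divisor_chain_def by (auto intro: te_embed.hom_dvd)
  next
    case 2
    then show ?thesis
      using Dr B i by (auto simp flip: te_embed_def intro: te_embed_dvd_eps)
  next
    case 3
    then have "Suc (i - r) < m'" "Suc (i - r) < n'" using i B Dr(1) by auto
    then have "B $$ (i - r, i - r) dvd B $$ (Suc (i - r), Suc (i - r))"
      using B unfolding diagonal_divisor_chain_def by auto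
    then show ?thesis
      using 3 B i Dr(1) by (auto simp: Suc_diff_le intro: eps_dvd_eps)
  qed
qed

lemma admits_diagonal_reduction_te_normal_form:
  assumes edr: "elementary_divisor_ring TYPE('a :: idom)"
    and Dr: "Dr \<in> carrier_mat r r" "diagonal_divisor_chain Dr" "\<forall>i<r. Dr $$ (i, i) \<noteq> 0"
    and Y: "Y \<in> carrier_mat m' n'"
  shows "admits_diagonal_reduction
    (four_block_mat (map_mat te_embed Dr) (0\<^sub>m r n') (0\<^sub>m m' r) (te_mat (0\<^sub>m m' n') (Y :: 'a fract mat)))"
proof -
  obtain c X where "X \<in> carrier_mat (dim_row Y) (dim_col Y)" and Y_eq: "Y = c \<cdot>\<^sub>m map_mat to_fract X"
    by (rule fract_mat_common_denominator)
  have X: "X \<in> carrier_mat m' n'"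
    using \<open>X \<in> carrier_mat (dim_row Y) (dim_col Y)\<close> Y by auto
  obtain B where XB: "equivalent_mat X B" and B: "diagonal_divisor_chain B"
    using edr unfolding elementary_divisor_ring_def admits_diagonal_reduction_iff by blast
  have "B \<in> carrier_mat m' n'" using XB X by (rule equivalent_mat_carrier)
  then have "diagonal_divisor_chain (four_block_mat (map_mat te_embed Dr) (0\<^sub>m r n') (0\<^sub>m m' r)
      (te_mat (0\<^sub>m m' n') (c \<cdot>\<^sub>m map_mat to_fract B)))"
    using Dr B by (intro diagonal_divisor_chain_te_normal_form)
  moreover have "equivalent_mat
      (four_block_mat (map_mat te_embed Dr) (0\<^sub>m r n') (0\<^sub>m m' r) (te_mat (0\<^sub>m m' n') Y))
      (four_block_mat (map_mat te_embed Dr) (0\<^sub>m r n') (0\<^sub>m m' r) (te_mat (0\<^sub>m m' n') (c \<cdot>\<^sub>m map_mat to_fract B)))"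
    unfolding Y_eq using equivalent_mat_eps[OF XB X] X Dr(1)
    by (intro equivalent_mat_four_block_diag) auto
  ultimately show ?thesis
    unfolding admits_diagonal_reduction_iff by blast
qed

lemma elementary_divisor_ring_triv_ext_qf:
  assumes edr: "elementary_divisor_ring TYPE('a :: idom)"
  shows "elementary_divisor_ring TYPE('a triv_ext_qf)"
  unfolding elementary_divisor_ring_def
proof
  fix M :: "'a triv_ext_qf mat"
  define m n where "m = dim_row M" and "n = dim_col M"
  have M: "M \<in> carrier_mat m n" unfolding m_def n_def by (rule carrier_matI) simp_all
  obtain D where ND: "equivalent_mat (map_mat te_fst M) D" and chain: "diagonal_divisor_chain D"
    using edr unfolding elementary_divisor_ring_def admits_diagonal_reduction_iff by blast
  have D: "D \<in> carrier_mat m n" using ND M by (simp add: equivalent_mat_carrier)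
  obtain r Dr where r: "r \<le> m" "r \<le> n"
    and Dr: "Dr \<in> carrier_mat r r" "diagonal_divisor_chain Dr" "\<forall>i<r. Dr $$ (i, i) \<noteq> 0"
    and D_eq: "D = four_block_mat Dr (0\<^sub>m r (n - r)) (0\<^sub>m (m - r) r) (0\<^sub>m (m - r) (n - r))"
    by (rule diagonal_divisor_chain_split[OF chain D])
  obtain F where MF: "equivalent_mat M F" and F: "map_mat te_fst F = D"
    by (rule equivalent_mat_lift_retraction[OF te_fst.semiring_hom_axioms te_embed.semiring_hom_axioms _ ND])
       (simp add: te_embed_def)
  have G: "map_mat te_snd F \<in> carrier_mat (r + (m - r)) (r + (n - r))"
    using equivalent_mat_carrier[OF MF M] r by auto
  have "diagonal_mat Dr" using Dr(2) unfolding diagonal_divisor_chain_def ..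
  then obtain Y where Y: "Y \<in> carrier_mat (m - r) (n - r)"
    and "equivalent_mat (te_mat D (map_mat te_snd F))
      (te_mat D (four_block_mat (0\<^sub>m r r) (0\<^sub>m r (n - r)) (0\<^sub>m (m - r) r) Y))"
    unfolding D_eq by (rule te_mat_clear_eps_border[OF Dr(1) _ Dr(3) G])
  moreover have "te_mat D (map_mat te_snd F) = F"
    using te_mat_decompose[of F] by (simp add: F)
  ultimately have "equivalent_mat F
      (te_mat D (four_block_mat (0\<^sub>m r r) (0\<^sub>m r (n - r)) (0\<^sub>m (m - r) r) Y))"
    by simp
  then have "equivalent_mat M
      (te_mat D (four_block_mat (0\<^sub>m r r) (0\<^sub>m r (n - r)) (0\<^sub>m (m - r) r) Y))"
    by (rule equivalent_mat_trans[OF MF])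
  moreover have "admits_diagonal_reduction
      (te_mat D (four_block_mat (0\<^sub>m r r) (0\<^sub>m r (n - r)) (0\<^sub>m (m - r) r) Y))"
    unfolding D_eq te_mat_four_block_diag[OF Dr(1) Y]
    by (rule admits_diagonal_reduction_te_normal_form[OF edr Dr Y])
  ultimately show "admits_diagonal_reduction M"
    by (rule admits_diagonal_reduction_equivalent)
qed

theorem corollary3p13:
  shows "elementary_divisor_ring TYPE('a::idom triv_ext_qf) \<longleftrightarrow>
         elementary_divisor_ring TYPE('a::idom)"
proof
  assume "elementary_divisor_ring TYPE('a triv_ext_qf)"
  then show "elementary_divisor_ring TYPE('a)"
    by (rule elementary_divisor_ring_surj_hom[OF te_fst.comm_ring_hom_axioms te_fst_surj])
next
  assume "elementary_divisor_ring TYPE('a)"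
  then show "elementary_divisor_ring TYPE('a triv_ext_qf)"
    by (rule elementary_divisor_ring_triv_ext_qf)
qed

end
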